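(* Let $G$ and $H$ be finite simple graphs without isolated vertices. Let $g=(A_0,A_1,A_2)$ be a $\gamma_{tR}(G)$-function with $|A_2|$ maximum among all $\gamma_{tR}(G)$-functions, and let $h=(B_0,B_1,B_2)$ be a $\gamma_{tR}(H)$-function with $|B_2|$ maximum among all $\gamma_{tR}(H)$-functions. Then $$\max\{\rho(H)\gamma_{tR}(G),\rho(G)\gamma_{tR}(H)\}\le \gamma_{tR}(G\times H)\le \gamma_{tR}(H)\gamma_{tR}(G)-2|A_2||B_2|.$$
   Context: For a graph $G$ without isolated vertices, a total Roman dominating function is a map $f:V(G)\to\{0,1,2\}$, written $f=(V_0,V_1,V_2)$ with $V_i=\{v: f(v)=i\}$, such that every vertex in $V_0$ has a neighbor in $V_2$ and the subgraph induced by $V_1\cup V_2$ has no isolated vertices. Its weight is $\omega(f)=\sum_v f(v)$. The total Roman domination number $\gamma_{tR}(G)$ is the minimum weight of a total Roman dominating function; a $\gamma_{tR}(G)$-function is one attaining it. A packing of $G$ is a set $D$ of vertices with $N[u]\cap N[v]=\emptyset$ for all distinct $u,v\in D$ (closed neighborhoods); $\rho(G)$ is the maximum size of a packing. The direct product $G\times H$ has vertex set $V(G)\times V(H)$, with $(g,h)(g',h')$ an edge iff $gg'\in E(G)$ and $hh'\in E(H)$. *)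

theory Defs
  imports Main
begin

definition simple_graph :: "'a set \<Rightarrow> ('a \<Rightarrow> 'a \<Rightarrow> bool) \<Rightarrow> bool" where
  "simple_graph V E \<longleftrightarrow> finite V \<and> (\<forall>u v. E u v \<longrightarrow> u \<in> V \<and> v \<in> V)
     \<and> (\<forall>u v. E u v \<longrightarrow> E v u) \<and> (\<forall>v. \<not> E v v)"

definition no_isolated :: "'a set \<Rightarrow> ('a \<Rightarrow> 'a \<Rightarrow> bool) \<Rightarrow> bool" where
  "no_isolated V E \<longleftrightarrow> (\<forall>v\<in>V. \<exists>u. E v u)"

definition is_trdf :: "'a set \<Rightarrow> ('a \<Rightarrow> 'a \<Rightarrow> bool) \<Rightarrow> ('a \<Rightarrow> nat) \<Rightarrow> bool" where
  "is_trdf V E f \<longleftrightarrow> (\<forall>v\<in>V. f v \<le> 2)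
     \<and> (\<forall>v\<in>V. f v = 0 \<longrightarrow> (\<exists>u. E v u \<and> f u = 2))
     \<and> (\<forall>v\<in>V. f v \<noteq> 0 \<longrightarrow> (\<exists>u. E v u \<and> f u \<noteq> 0))"

definition weight :: "'a set \<Rightarrow> ('a \<Rightarrow> nat) \<Rightarrow> nat" where
  "weight V f = (\<Sum>v\<in>V. f v)"

definition gamma_tR :: "'a set \<Rightarrow> ('a \<Rightarrow> 'a \<Rightarrow> bool) \<Rightarrow> nat" where
  "gamma_tR V E = Min (weight V ` {f. is_trdf V E f})"

definition is_gamma_tR_function :: "'a set \<Rightarrow> ('a \<Rightarrow> 'a \<Rightarrow> bool) \<Rightarrow> ('a \<Rightarrow> nat) \<Rightarrow> bool" where
  "is_gamma_tR_function V E f \<longleftrightarrow> is_trdf V E f \<and> weight V f = gamma_tR V E"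

definition level :: "'a set \<Rightarrow> ('a \<Rightarrow> nat) \<Rightarrow> nat \<Rightarrow> 'a set" where
  "level V f i = {v\<in>V. f v = i}"

definition cnbhd :: "('a \<Rightarrow> 'a \<Rightarrow> bool) \<Rightarrow> 'a \<Rightarrow> 'a set" where
  "cnbhd E v = insert v {u. E v u}"

definition is_packing :: "'a set \<Rightarrow> ('a \<Rightarrow> 'a \<Rightarrow> bool) \<Rightarrow> 'a set \<Rightarrow> bool" where
  "is_packing V E D \<longleftrightarrow> D \<subseteq> V \<and>
     (\<forall>u\<in>D. \<forall>v\<in>D. u \<noteq> v \<longrightarrow> cnbhd E u \<inter> cnbhd E v = {})"

definition rho :: "'a set \<Rightarrow> ('a \<Rightarrow> 'a \<Rightarrow> bool) \<Rightarrow> nat" where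
  "rho V E = Max (card ` {D. is_packing V E D})"

definition direct_prod_edge ::
  "('a \<Rightarrow> 'a \<Rightarrow> bool) \<Rightarrow> ('b \<Rightarrow> 'b \<Rightarrow> bool) \<Rightarrow> ('a \<times> 'b) \<Rightarrow> ('a \<times> 'b) \<Rightarrow> bool" where
  "direct_prod_edge EG EH x y \<longleftrightarrow> EG (fst x) (fst y) \<and> EH (snd x) (snd y)"

end

theory Submission
  imports Defs
begin

text \<open>Lower bound: if \<open>D\<close> is a packing of \<open>H\<close> and \<open>f\<close> a total Roman dominating function of
\<open>G \<times> H\<close>, then for every \<open>v \<in> D\<close> the map \<open>u \<mapsto> min 2 (\<Sum>w\<in>N[v]. f (u, w))\<close> is a total Roman
dominating function of \<open>G\<close>, so \<open>f\<close> has weight at least \<open>\<gamma>\<^sub>t\<^sub>R(G)\<close> on each of the pairwise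
disjoint slabs \<open>V(G) \<times> N[v]\<close>. Upper bound: \<open>(u, v) \<mapsto> min 2 (g u * h v)\<close> is a total Roman
dominating function of \<open>G \<times> H\<close> whose weight falls short of \<open>\<omega>(g) \<omega>(h)\<close> by exactly 2 on each
vertex of \<open>A\<^sub>2 \<times> B\<^sub>2\<close> and nowhere else.\<close>

lemma simple_graph_finite: "simple_graph V E \<Longrightarrow> finite V"
  by (simp add: simple_graph_def)

lemma cnbhd_subset: "simple_graph V E \<Longrightarrow> v \<in> V \<Longrightarrow> cnbhd E v \<subseteq> V"
  by (auto simp: cnbhd_def simple_graph_def)

lemma finite_cnbhd: "simple_graph V E \<Longrightarrow> finite (cnbhd E v)"
proof -
  assume G: "simple_graph V E"
  then have "{u. E v u} \<subseteq> V" by (auto simp: simple_graph_def)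
  with simple_graph_finite[OF G] show ?thesis
    by (auto simp: cnbhd_def intro: finite_subset)
qed

lemma is_trdf_neighbour:
  assumes "is_trdf V E f" "v \<in> V"
  shows "\<exists>u. E v u \<and> f u \<noteq> 0 \<and> (f v = 0 \<longrightarrow> f u = 2)"
  using assms by (cases "f v = 0") (fastforce simp: is_trdf_def)+

lemma is_trdf_le_2: "is_trdf V E f \<Longrightarrow> v \<in> V \<Longrightarrow> f v \<le> 2"
  by (simp add: is_trdf_def)

lemma is_trdfI:
  assumes "\<And>v. v \<in> V \<Longrightarrow> f v \<le> 2"
    and "\<And>v. v \<in> V \<Longrightarrow> \<exists>u. E v u \<and> f u \<noteq> 0 \<and> (f v = 0 \<longrightarrow> f u = 2)"
  shows "is_trdf V E f"
  unfolding is_trdf_def using assms by metis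

lemma weight_le_twice_card:
  assumes "is_trdf V E f"
  shows "weight V f \<le> 2 * card V"
proof -
  have "weight V f \<le> (\<Sum>v\<in>V. 2)"
    unfolding weight_def using assms by (intro sum_mono) (rule is_trdf_le_2)
  then show ?thesis by simp
qed

lemma finite_trdf_weights:
  "simple_graph V E \<Longrightarrow> finite (weight V ` {f. is_trdf V E f})"
  by (rule finite_subset[of _ "{..2 * card V}"]) (auto dest: weight_le_twice_card)

lemma gamma_tR_le_weight:
  "simple_graph V E \<Longrightarrow> is_trdf V E f \<Longrightarrow> gamma_tR V E \<le> weight V f"
  unfolding gamma_tR_def by (auto intro: Min_le finite_trdf_weights)

lemma gamma_tR_function_exists:
  assumes "simple_graph V E" "no_isolated V E"
  shows "\<exists>f. is_gamma_tR_function V E f"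
proof -
  have "is_trdf V E (\<lambda>_. 1)"
    using assms(2) by (auto simp: is_trdf_def no_isolated_def)
  then have "weight V ` {f. is_trdf V E f} \<noteq> {}" by auto
  from Min_in[OF finite_trdf_weights[OF assms(1)] this] show ?thesis
    unfolding gamma_tR_def is_gamma_tR_function_def by auto
qed

lemma max_packing_exists:
  assumes "simple_graph V E"
  shows "\<exists>D. is_packing V E D \<and> card D = rho V E"
proof -
  have "{D. is_packing V E D} \<subseteq> Pow V" by (auto simp: is_packing_def)
  with simple_graph_finite[OF assms] have "finite (card ` {D. is_packing V E D})"
    by (meson finite_Pow_iff finite_imageI finite_subset)
  moreover have "card ` {D. is_packing V E D} \<noteq> {}"
    using is_packing_def by auto
  ultimately show ?thesis
    unfolding rho_def using Max_in by fastforce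
qed

lemma simple_graph_direct_prod:
  "simple_graph VG EG \<Longrightarrow> simple_graph VH EH
     \<Longrightarrow> simple_graph (VG \<times> VH) (direct_prod_edge EG EH)"
  unfolding simple_graph_def direct_prod_edge_def by auto

lemma no_isolated_direct_prod:
  "no_isolated VG EG \<Longrightarrow> no_isolated VH EH
     \<Longrightarrow> no_isolated (VG \<times> VH) (direct_prod_edge EG EH)"
  unfolding no_isolated_def direct_prod_edge_def by fastforce

lemma is_trdf_direct_prod_swap:
  assumes f: "is_trdf (VG \<times> VH) (direct_prod_edge EG EH) f"
  shows "is_trdf (VH \<times> VG) (direct_prod_edge EH EG) (f \<circ> prod.swap)"
proof (rule is_trdfI)
  fix x :: "'b \<times> 'a"
  assume "x \<in> VH \<times> VG"
  then have x: "prod.swap x \<in> VG \<times> VH" by auto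
  show "(f \<circ> prod.swap) x \<le> 2" using is_trdf_le_2[OF f x] by simp
  from is_trdf_neighbour[OF f x] obtain y
    where y: "direct_prod_edge EG EH (prod.swap x) y \<and> f y \<noteq> 0
      \<and> (f (prod.swap x) = 0 \<longrightarrow> f y = 2)" ..
  moreover have "direct_prod_edge EH EG x (prod.swap y)"
    using y by (simp add: direct_prod_edge_def)
  ultimately show "\<exists>y. direct_prod_edge EH EG x y \<and> (f \<circ> prod.swap) y \<noteq> 0
      \<and> ((f \<circ> prod.swap) x = 0 \<longrightarrow> (f \<circ> prod.swap) y = 2)"
    by (intro exI[of _ "prod.swap y"]) simp
qed

lemma weight_direct_prod_swap:
  "weight (VH \<times> VG) (f \<circ> prod.swap) = weight (VG \<times> VH) f"
  using sum.reindex[of prod.swap "VH \<times> VG" f]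
  by (simp add: weight_def product_swap inj_on_def)

lemma gamma_tR_direct_prod_commute:
  "gamma_tR (VH \<times> VG) (direct_prod_edge EH EG) = gamma_tR (VG \<times> VH) (direct_prod_edge EG EH)"
proof -
  have swap_weights: "weight (VG \<times> VH) ` {f. is_trdf (VG \<times> VH) (direct_prod_edge EG EH) f}
      \<subseteq> weight (VH \<times> VG) ` {f. is_trdf (VH \<times> VG) (direct_prod_edge EH EG) f}"
    for VG :: "'x set" and VH :: "'y set" and EG EH
    by (auto intro!: image_eqI[where x = "_ \<circ> prod.swap"] is_trdf_direct_prod_swap
        simp: weight_direct_prod_swap)
  show ?thesis
    unfolding gamma_tR_def by (rule arg_cong[OF subset_antisym[OF swap_weights swap_weights]])
qed

lemma is_trdf_neighbourhood_projection:
  assumes H: "simple_graph VH EH" and f: "is_trdf (VG \<times> VH) (direct_prod_edge EG EH) f"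
    and v: "v \<in> VH"
  shows "is_trdf VG EG (\<lambda>u. min 2 (\<Sum>w\<in>cnbhd EH v. f (u, w)))" (is "is_trdf VG EG ?p")
proof (rule is_trdfI)
  have le_p: "min 2 (f (u, w)) \<le> ?p u" if "w \<in> cnbhd EH v" for u w
  proof -
    have "f (u, w) \<le> (\<Sum>w\<in>cnbhd EH v. f (u, w))"
      using that finite_cnbhd[OF H] by (intro member_le_sum) auto
    then show ?thesis by simp
  qed
  fix u
  assume u: "u \<in> VG"
  show "?p u \<le> 2" by simp
  from u v have "(u, v) \<in> VG \<times> VH" by simp
  from is_trdf_neighbour[OF f this] obtain y
    where y: "direct_prod_edge EG EH (u, v) y \<and> f y \<noteq> 0 \<and> (f (u, v) = 0 \<longrightarrow> f y = 2)" ..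
  obtain u' w where y_eq: "y = (u', w)" by (cases y)
  with y have "EG u u'" and w: "w \<in> cnbhd EH v"
    by (simp_all add: direct_prod_edge_def cnbhd_def)
  have "v \<in> cnbhd EH v" by (simp add: cnbhd_def)
  have "min 2 (f (u', w)) \<le> ?p u'" by (rule le_p[OF w])
  moreover have "?p u' \<le> 2" by simp
  moreover have "f (u', w) \<noteq> 0" "f (u, v) = 0 \<longrightarrow> f (u', w) = 2"
    using y y_eq by simp_all
  moreover have "?p u = 0 \<longrightarrow> f (u, v) = 0"
    using le_p[OF \<open>v \<in> cnbhd EH v\<close>, of u] by (auto simp: min_def split: if_splits)
  ultimately have "?p u' \<noteq> 0 \<and> (?p u = 0 \<longrightarrow> ?p u' = 2)" by linarith
  with \<open>EG u u'\<close> show "\<exists>u'. EG u u' \<and> ?p u' \<noteq> 0 \<and> (?p u = 0 \<longrightarrow> ?p u' = 2)"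
    by (intro exI[of _ u'] conjI) blast+
qed

lemma packing_gamma_tR_le_weight:
  assumes G: "simple_graph VG EG" and H: "simple_graph VH EH"
    and f: "is_trdf (VG \<times> VH) (direct_prod_edge EG EH) f" and D: "is_packing VH EH D"
  shows "card D * gamma_tR VG EG \<le> weight (VG \<times> VH) f"
proof -
  have DV: "D \<subseteq> VH" using D by (simp add: is_packing_def)
  have slab: "gamma_tR VG EG \<le> (\<Sum>x\<in>VG \<times> cnbhd EH v. f x)" if "v \<in> VH" for v
  proof -
    have "gamma_tR VG EG \<le> weight VG (\<lambda>u. min 2 (\<Sum>w\<in>cnbhd EH v. f (u, w)))"
      by (rule gamma_tR_le_weight[OF G is_trdf_neighbourhood_projection[OF H f that]])
    also have "\<dots> \<le> (\<Sum>u\<in>VG. \<Sum>w\<in>cnbhd EH v. f (u, w))"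
      unfolding weight_def by (intro sum_mono) simp
    also have "\<dots> = (\<Sum>x\<in>VG \<times> cnbhd EH v. f x)"
      by (simp add: sum.cartesian_product)
    finally show ?thesis .
  qed
  have "card D * gamma_tR VG EG = (\<Sum>v\<in>D. gamma_tR VG EG)" by simp
  also have "\<dots> \<le> (\<Sum>v\<in>D. \<Sum>x\<in>VG \<times> cnbhd EH v. f x)"
    using DV slab by (intro sum_mono) auto
  also have "\<dots> = (\<Sum>x\<in>(\<Union>v\<in>D. VG \<times> cnbhd EH v). f x)"
  proof (rule sum.UNION_disjoint[symmetric])
    show "finite D"
      using DV simple_graph_finite[OF H] by (rule finite_subset)
    show "\<forall>v\<in>D. finite (VG \<times> cnbhd EH v)"
      using simple_graph_finite[OF G] finite_cnbhd[OF H] by blast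
    show "\<forall>v\<in>D. \<forall>v'\<in>D. v \<noteq> v' \<longrightarrow> VG \<times> cnbhd EH v \<inter> VG \<times> cnbhd EH v' = {}"
      using D unfolding is_packing_def by blast
  qed
  also have "\<dots> \<le> weight (VG \<times> VH) f"
    unfolding weight_def
    using DV cnbhd_subset[OF H] simple_graph_finite[OF G] simple_graph_finite[OF H]
    by (intro sum_mono2) auto
  finally show ?thesis .
qed

lemma rho_gamma_tR_le_gamma_tR_direct_prod:
  assumes "simple_graph VG EG" "no_isolated VG EG" "simple_graph VH EH" "no_isolated VH EH"
  shows "rho VH EH * gamma_tR VG EG \<le> gamma_tR (VG \<times> VH) (direct_prod_edge EG EH)"
proof -
  obtain f where f: "is_gamma_tR_function (VG \<times> VH) (direct_prod_edge EG EH) f"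
    using gamma_tR_function_exists simple_graph_direct_prod no_isolated_direct_prod assms
    by metis
  obtain D where D: "is_packing VH EH D" "card D = rho VH EH"
    using max_packing_exists[OF assms(3)] by blast
  have "card D * gamma_tR VG EG \<le> weight (VG \<times> VH) f"
    using f by (intro packing_gamma_tR_le_weight[OF assms(1,3) _ D(1)])
      (simp add: is_gamma_tR_function_def)
  with f D(2) show ?thesis by (simp add: is_gamma_tR_function_def)
qed

lemma is_trdf_direct_prod_min_mult:
  assumes g: "is_trdf VG EG g" and h: "is_trdf VH EH h"
  shows "is_trdf (VG \<times> VH) (direct_prod_edge EG EH) (\<lambda>(u, v). min 2 (g u * h v))"
    (is "is_trdf _ _ ?F")
proof (rule is_trdfI)
  fix x
  assume "x \<in> VG \<times> VH"
  then obtain u v where x: "x = (u, v)" "u \<in> VG" "v \<in> VH" by blast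
  show "?F x \<le> 2" by (simp add: x)
  from is_trdf_neighbour[OF g x(2)]
  obtain u' where u': "EG u u' \<and> g u' \<noteq> 0 \<and> (g u = 0 \<longrightarrow> g u' = 2)" ..
  from is_trdf_neighbour[OF h x(3)]
  obtain v' where v': "EH v v' \<and> h v' \<noteq> 0 \<and> (h v = 0 \<longrightarrow> h v' = 2)" ..
  have "?F (u', v') = 2" if "?F x = 0"
  proof -
    from that have "g u = 0 \<or> h v = 0" by (simp add: x min_def split: if_splits)
    with u' v' have "g u' = 2 \<and> h v' \<noteq> 0 \<or> g u' \<noteq> 0 \<and> h v' = 2" by auto
    then show ?thesis by auto
  qed
  moreover have "?F (u', v') \<noteq> 0" using u' v' by simp
  moreover have "direct_prod_edge EG EH x (u', v')"
    using u' v' by (simp add: x direct_prod_edge_def)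
  ultimately show "\<exists>y. direct_prod_edge EG EH x y \<and> ?F y \<noteq> 0 \<and> (?F x = 0 \<longrightarrow> ?F y = 2)"
    by (intro exI[of _ "(u', v')"] conjI impI)
qed

lemma weight_direct_prod_min_mult:
  assumes "finite VG" "finite VH" "\<forall>u\<in>VG. g u \<le> 2" "\<forall>v\<in>VH. h v \<le> 2"
  shows "weight (VG \<times> VH) (\<lambda>(u, v). min 2 (g u * h v))
           + 2 * card (level VG g 2) * card (level VH h 2) = weight VG g * weight VH h"
proof -
  let ?S = "level VG g 2 \<times> level VH h 2"
  have pointwise: "min 2 (g (fst x) * h (snd x)) + (if x \<in> ?S then 2 else 0)
      = g (fst x) * h (snd x)" if "x \<in> VG \<times> VH" for x
  proof -
    have "g (fst x) \<in> {0, 1, 2}" "h (snd x) \<in> {0, 1, 2}" using assms(3,4) that by auto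
    then show ?thesis using that by (auto simp: level_def)
  qed
  have "2 * card (level VG g 2) * card (level VH h 2) = (\<Sum>x\<in>?S. 2::nat)"
    by (simp add: card_cartesian_product)
  also have "\<dots> = (\<Sum>x\<in>VG \<times> VH. if x \<in> ?S then 2 else 0)"
    using assms(1,2) by (intro sum.mono_neutral_cong_left) (auto simp: level_def)
  finally have "weight (VG \<times> VH) (\<lambda>(u, v). min 2 (g u * h v))
           + 2 * card (level VG g 2) * card (level VH h 2)
      = (\<Sum>x\<in>VG \<times> VH. min 2 (g (fst x) * h (snd x)) + (if x \<in> ?S then 2 else 0))"
    by (simp add: weight_def sum.distrib case_prod_beta)
  also have "\<dots> = (\<Sum>x\<in>VG \<times> VH. g (fst x) * h (snd x))"
    by (rule sum.cong[OF refl pointwise])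
  also have "\<dots> = weight VG g * weight VH h"
    unfolding weight_def sum_product sum.cartesian_product by (simp add: case_prod_beta)
  finally show ?thesis .
qed

lemma gamma_tR_direct_prod_le:
  assumes G: "simple_graph VG EG" and H: "simple_graph VH EH"
    and g: "is_gamma_tR_function VG EG g" and h: "is_gamma_tR_function VH EH h"
  shows "gamma_tR (VG \<times> VH) (direct_prod_edge EG EH)
           + 2 * card (level VG g 2) * card (level VH h 2) \<le> gamma_tR VG EG * gamma_tR VH EH"
proof -
  have g': "is_trdf VG EG g" "weight VG g = gamma_tR VG EG"
    and h': "is_trdf VH EH h" "weight VH h = gamma_tR VH EH"
    using g h by (simp_all add: is_gamma_tR_function_def)
  then have "gamma_tR (VG \<times> VH) (direct_prod_edge EG EH)
      \<le> weight (VG \<times> VH) (\<lambda>(u, v). min 2 (g u * h v))"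
    by (intro gamma_tR_le_weight simple_graph_direct_prod G H is_trdf_direct_prod_min_mult)
  moreover have "weight (VG \<times> VH) (\<lambda>(u, v). min 2 (g u * h v))
      + 2 * card (level VG g 2) * card (level VH h 2) = gamma_tR VG EG * gamma_tR VH EH"
    using weight_direct_prod_min_mult[OF simple_graph_finite[OF G] simple_graph_finite[OF H]]
      is_trdf_le_2[OF g'(1)] is_trdf_le_2[OF h'(1)] g'(2) h'(2)
    by simp
  ultimately show ?thesis by linarith
qed

theorem theorem2p1:
  fixes VG :: "'a set" and EG :: "'a \<Rightarrow> 'a \<Rightarrow> bool"
    and VH :: "'b set" and EH :: "'b \<Rightarrow> 'b \<Rightarrow> bool"
    and g :: "'a \<Rightarrow> nat" and h :: "'b \<Rightarrow> nat"
  assumes G: "simple_graph VG EG" "no_isolated VG EG"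
    and H: "simple_graph VH EH" "no_isolated VH EH"
    and g: "is_gamma_tR_function VG EG g"
    and gmax: "\<forall>g'. is_gamma_tR_function VG EG g' \<longrightarrow> card (level VG g' 2) \<le> card (level VG g 2)"
    and h: "is_gamma_tR_function VH EH h"
    and hmax: "\<forall>h'. is_gamma_tR_function VH EH h' \<longrightarrow> card (level VH h' 2) \<le> card (level VH h 2)"
  shows "max (rho VH EH * gamma_tR VG EG) (rho VG EG * gamma_tR VH EH)
           \<le> gamma_tR (VG \<times> VH) (direct_prod_edge EG EH)
       \<and> int (gamma_tR (VG \<times> VH) (direct_prod_edge EG EH))
           \<le> int (gamma_tR VH EH) * int (gamma_tR VG EG)
              - 2 * int (card (level VG g 2)) * int (card (level VH h 2))"
proof
  show "max (rho VH EH * gamma_tR VG EG) (rho VG EG * gamma_tR VH EH)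
      \<le> gamma_tR (VG \<times> VH) (direct_prod_edge EG EH)"
    using rho_gamma_tR_le_gamma_tR_direct_prod[OF G H]
      rho_gamma_tR_le_gamma_tR_direct_prod[OF H G]
    by (simp add: gamma_tR_direct_prod_commute[of VH VG EH EG])
  from gamma_tR_direct_prod_le[OF G(1) H(1) g h]
  have "int (gamma_tR (VG \<times> VH) (direct_prod_edge EG EH)
        + 2 * card (level VG g 2) * card (level VH h 2))
      \<le> int (gamma_tR VG EG * gamma_tR VH EH)"
    by (rule of_nat_mono)
  then show "int (gamma_tR (VG \<times> VH) (direct_prod_edge EG EH))
      \<le> int (gamma_tR VH EH) * int (gamma_tR VG EG)
         - 2 * int (card (level VG g 2)) * int (card (level VH h 2))"
    unfolding of_nat_add of_nat_mult of_nat_numeral by (simp add: mult.commute)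
qed

end
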